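(* Let $G=(V\cup C,E)$ be a protograph in which every variable node has degree at least $2$, and assume that (1) the degree-2 subgraph $G_2$ contains no cycle, and (2) every degree-2 variable node is joined by a path in $G$ to a variable node of degree at least $3$. Let $\epsilon_{\mathrm{th}}$ be the BEC density evolution threshold of $G$. Then for every $\epsilon$ with $0\le\epsilon<\epsilon_{\mathrm{th}}$ there exist positive constants $\alpha,\beta,K$ and an integer $t_0$ such that $$x_t(i)\le K\exp\!\left(-\beta\, 2^{\alpha t}\right)\qquad\text{for all } 1\le i\le |E| \text{ and all } t\ge t_0 .$$
   Context: A protograph is a finite bipartite multigraph $G=(V\cup C,E)$ with variable (bit) nodes $V$, check nodes $C$, and ordered edges $E=\{e_1,\dots,e_{|E|}\}$; parallel edges between a variable node and a check node are allowed. For an edge $e$, $v(e)$ and $c(e)$ denote its variable-node and check-node endpoints. The degree of a node is the number of incident edges counted with multiplicity. For an edge $e$, $E_c(e)=\{i: c(e_i)=c(e),\ e_i\neq e\}$ and $E_v(e)=\{i: v(e_i)=v(e),\ e_i\ne e\}$. The degree-2 subgraph $G_2$ of $G$ consists of all degree-2 variable nodes, all edges incident to them, and the check nodes incident to those edges; a cycle in $G_2$ may have length $2$ (two parallel edges between the same variable and check node). Protograph density evolution over the binary erasure channel BEC$(\epsilon)$, $\epsilon\in[0,1]$: $x_0(i)=\epsilon$ for all $i$, and for $t\ge 0$, $y_{t+1}(j)=1-\prod_{i\in E_c(e_j)}(1-x_t(i))$, $x_{t+1}(i)=\epsilon\prod_{j\in E_v(e_i)}y_{t+1}(j)$ (empty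 products equal $1$). The threshold is $\epsilon_{\mathrm{th}}=\sup\{\epsilon\in[0,1]: \max_i x_t(i)\to 0 \text{ as } t\to\infty\}$. *)

theory Defs
  imports Complex_Main
begin

text \<open>A protograph with variable nodes V (type 'v), check nodes C (type 'c) and
  ordered edges indexed 0..<m; edge i joins variable node vn i and check node cn i.
  Parallel edges are allowed (vn i = vn j and cn i = cn j with i \<noteq> j).\<close>

definition protograph :: "'v set \<Rightarrow> 'c set \<Rightarrow> nat \<Rightarrow> (nat \<Rightarrow> 'v) \<Rightarrow> (nat \<Rightarrow> 'c) \<Rightarrow> bool" where
  "protograph V C m vn cn \<longleftrightarrow> finite V \<and> finite C \<and> (\<forall>i<m. vn i \<in> V \<and> cn i \<in> C)"

definition vdeg :: "nat \<Rightarrow> (nat \<Rightarrow> 'v) \<Rightarrow> 'v \<Rightarrow> nat" where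
  "vdeg m vn v = card {i. i < m \<and> vn i = v}"

definition Ec :: "nat \<Rightarrow> (nat \<Rightarrow> 'c) \<Rightarrow> nat \<Rightarrow> nat set" where
  "Ec m cn j = {i. i < m \<and> cn i = cn j \<and> i \<noteq> j}"

definition Ev :: "nat \<Rightarrow> (nat \<Rightarrow> 'v) \<Rightarrow> nat \<Rightarrow> nat set" where
  "Ev m vn j = {i. i < m \<and> vn i = vn j \<and> i \<noteq> j}"

definition joins :: "(nat \<Rightarrow> 'v) \<Rightarrow> (nat \<Rightarrow> 'c) \<Rightarrow> nat \<Rightarrow> 'v + 'c \<Rightarrow> 'v + 'c \<Rightarrow> bool" where
  "joins vn cn i a b \<longleftrightarrow>
     (a = Inl (vn i) \<and> b = Inr (cn i)) \<or> (a = Inr (cn i) \<and> b = Inl (vn i))"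

definition G2_edge :: "nat \<Rightarrow> (nat \<Rightarrow> 'v) \<Rightarrow> nat \<Rightarrow> bool" where
  "G2_edge m vn i \<longleftrightarrow> i < m \<and> vdeg m vn (vn i) = 2"

text \<open>A cycle in G_2: k \<ge> 2 distinct edges es and k distinct nodes ns with edge es!j
  joining ns!j and ns!((j+1) mod k). Length-2 cycles (two parallel edges) are included.\<close>
definition has_cycle_G2 :: "nat \<Rightarrow> (nat \<Rightarrow> 'v) \<Rightarrow> (nat \<Rightarrow> 'c) \<Rightarrow> bool" where
  "has_cycle_G2 m vn cn \<longleftrightarrow>
     (\<exists>es ns. length es = length ns \<and> length es \<ge> 2 \<and> distinct es \<and> distinct ns \<and>
        (\<forall>j < length es. G2_edge m vn (es ! j) \<and>
           joins vn cn (es ! j) (ns ! j) (ns ! ((j + 1) mod length es))))"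

definition adjG :: "nat \<Rightarrow> (nat \<Rightarrow> 'v) \<Rightarrow> (nat \<Rightarrow> 'c) \<Rightarrow> ('v + 'c) rel" where
  "adjG m vn cn = {(a, b). \<exists>i<m. joins vn cn i a b}"

text \<open>BEC protograph density evolution: de_x m vn cn eps t i = x_t(i);
  the check-to-variable message y_{t+1}(j) = 1 - prod_{i in E_c(e_j)} (1 - x_t(i)).\<close>
fun de_x :: "nat \<Rightarrow> (nat \<Rightarrow> 'v) \<Rightarrow> (nat \<Rightarrow> 'c) \<Rightarrow> real \<Rightarrow> nat \<Rightarrow> nat \<Rightarrow> real" where
  "de_x m vn cn eps 0 i = eps"
| "de_x m vn cn eps (Suc t) i =
     eps * (\<Prod>j\<in>Ev m vn i. 1 - (\<Prod>k\<in>Ec m cn j. 1 - de_x m vn cn eps t k))"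

definition de_y :: "nat \<Rightarrow> (nat \<Rightarrow> 'v) \<Rightarrow> (nat \<Rightarrow> 'c) \<Rightarrow> real \<Rightarrow> nat \<Rightarrow> nat \<Rightarrow> real" where
  "de_y m vn cn eps t j = 1 - (\<Prod>k\<in>Ec m cn j. 1 - de_x m vn cn eps (t - 1) k)"

definition threshold :: "nat \<Rightarrow> (nat \<Rightarrow> 'v) \<Rightarrow> (nat \<Rightarrow> 'c) \<Rightarrow> real" where
  "threshold m vn cn =
     Sup {eps. 0 \<le> eps \<and> eps \<le> 1 \<and>
               (\<lambda>t. Max ((\<lambda>i. de_x m vn cn eps t i) ` {..<m})) \<longlonglongrightarrow> 0}"

end

theory Submission
  imports Defs
begin

text \<open>Below the threshold the messages eventually fall under any level, because x_t is monotone
  in eps. Once all x_t(k) \<le> u, the union bound gives y_{t+1}(j) \<le> m u for every check message, so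
  an edge at a variable node of degree at least 3, whose message is a product of at least two check
  messages, gets x_{t+1}(i) \<le> (m u)^2. An edge i at a degree-2 variable node only passes on, with a
  factor m, the messages of the edges meeting its partner edge at a check node. Tracing these back
  through degree-2 edges walks in G_2, and a chain of m such steps would repeat an edge and close
  into a cycle of G_2. So every chain stops after fewer than m steps, at edges of degree at least 3
  or at a check node of degree 1 (whose message is 0), and m + 1 iterations later all messages are
  at most m^(m+2) u^2. The error thus squares every m + 1 iterations, which is doubly exponential
  decay.\<close>

lemma one_minus_prod_one_minus_unit_interval:
  fixes a :: "'b \<Rightarrow> 'a::linordered_idom"
  assumes "\<And>k. k \<in> A \<Longrightarrow> 0 \<le> a k \<and> a k \<le> 1"
  shows "0 \<le> 1 - (\<Prod>k\<in>A. 1 - a k) \<and> 1 - (\<Prod>k\<in>A. 1 - a k) \<le> 1"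
  using assms by (auto intro!: prod_nonneg prod_le_1)

lemma one_minus_prod_one_minus_mono:
  fixes a :: "'b \<Rightarrow> 'a::linordered_idom"
  assumes "\<And>k. k \<in> A \<Longrightarrow> 0 \<le> a k \<and> a k \<le> b k \<and> b k \<le> 1"
  shows "1 - (\<Prod>k\<in>A. 1 - a k) \<le> 1 - (\<Prod>k\<in>A. 1 - b k)"
  using assms by (intro diff_left_mono prod_mono) auto

lemma one_minus_prod_one_minus_le_sum:
  fixes a :: "'b \<Rightarrow> 'a::linordered_idom"
  assumes "\<And>k. k \<in> A \<Longrightarrow> 0 \<le> a k \<and> a k \<le> 1"
  shows "1 - (\<Prod>k\<in>A. 1 - a k) \<le> (\<Sum>k\<in>A. a k)"
  using assms
proof (induction A rule: infinite_finite_induct)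
  case (insert x F)
  have "0 \<le> (\<Prod>k\<in>F. 1 - a k)" "(\<Prod>k\<in>F. 1 - a k) \<le> 1" "0 \<le> a x"
    using insert.prems by (auto intro: prod_nonneg prod_le_1)
  then have "1 - (1 - a x) * (\<Prod>k\<in>F. 1 - a k) \<le> a x + (1 - (\<Prod>k\<in>F. 1 - a k))"
    using mult_left_le[of "\<Prod>k\<in>F. 1 - a k" "a x"] by (simp add: algebra_simps)
  then show ?case using insert by simp
qed simp_all

lemma prod_le_pair_of_factors:
  fixes f :: "'b \<Rightarrow> 'a::linordered_idom"
  assumes "finite A" "j1 \<in> A" "j2 \<in> A" "j1 \<noteq> j2" "\<And>j. j \<in> A \<Longrightarrow> 0 \<le> f j \<and> f j \<le> 1"
  shows "prod f A \<le> f j1 * f j2"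
proof -
  have "prod f A = f j1 * f j2 * prod f (A - {j1} - {j2})"
    using assms(1-4) by (simp add: prod.remove mult.assoc)
  moreover have "0 \<le> f j1 * f j2" "prod f (A - {j1} - {j2}) \<le> 1"
    using assms(2,3,5) by (auto intro: prod_le_1)
  ultimately show ?thesis by (simp add: mult_left_le)
qed

lemma iterated_squaring:
  fixes P :: "nat \<Rightarrow> real \<Rightarrow> bool"
  assumes "0 < A"
    and square: "\<And>t u. 0 \<le> u \<Longrightarrow> P t u \<Longrightarrow> P (t + p) (A * u\<^sup>2)"
    and start: "P T (1 / (2 * A))"
  shows "P (T + n * p) ((1/2) ^ (2 ^ n) / A)"
proof (induction n)
  case 0
  show ?case using start by simp
next
  case (Suc n)
  have "(1/2::real) ^ (2 ^ Suc n) = ((1/2) ^ (2 ^ n))\<^sup>2"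
    by (simp add: power_mult[symmetric] mult.commute)
  then have squared: "A * ((1/2) ^ (2 ^ n) / A)\<^sup>2 = (1/2) ^ (2 ^ Suc n) / A"
    using assms(1) by (simp add: power2_eq_square)
  have "0 \<le> (1/2::real) ^ (2 ^ n) / A"
    using assms(1) by simp
  then have "P (T + n * p + p) (A * ((1/2) ^ (2 ^ n) / A)\<^sup>2)"
    using Suc.IH by (rule square)
  then show ?case
    by (simp only: squared mult_Suc add.assoc add.commute[of p "n * p"])
qed

lemma half_pow_two_pow_le_exp:
  assumes "0 < p" "T \<le> t"
  shows "(1/2::real) ^ (2 ^ ((t - T) div p))
           \<le> exp (- (ln 2 / 2 powr (real T / real p + 1)) * 2 powr (1 / real p * real t))"
proof -
  define n where "n = (t - T) div p"
  define b where "b = real T / real p + 1"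
  have "t - T < (n + 1) * p"
    unfolding n_def using assms(1) dividend_less_times_div[of p "t - T"] by (simp add: mult.commute)
  then have "real (t - T) < real ((n + 1) * p)"
    by (simp only: of_nat_less_iff)
  then have "real t - real T < (real n + 1) * real p"
    using assms(2) by (simp add: algebra_simps)
  then have "1 / real p * real t - b < real n"
    unfolding b_def using assms(1) by (simp add: field_simps)
  then have "2 powr (1 / real p * real t) / 2 powr b \<le> 2 powr real n"
    by (simp add: powr_diff[symmetric])
  then have "ln 2 * (2 powr (1 / real p * real t) / 2 powr b) \<le> ln 2 * 2 ^ n"
    by (intro mult_left_mono) (simp_all add: powr_realpow)
  moreover have "exp (ln 2 * 2 ^ n) = (2::real) ^ (2 ^ n)"
    using powr_realpow[of 2 "2 ^ n"] by (simp add: powr_def mult.commute)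
  then have "(1/2::real) ^ (2 ^ n) = exp (- (ln 2 * 2 ^ n))"
    by (simp add: exp_minus power_one_over inverse_eq_divide)
  ultimately show ?thesis unfolding n_def b_def by simp
qed

declare de_x.simps(2) [simp del]

lemma finite_Ev [simp]: "finite (Ev m vn i)"
  by (simp add: Ev_def)

lemma de_y_Suc: "de_y m vn cn eps (Suc t) j = 1 - (\<Prod>k\<in>Ec m cn j. 1 - de_x m vn cn eps t k)"
  by (simp add: de_y_def)

lemma de_x_Suc: "de_x m vn cn eps (Suc t) i = eps * (\<Prod>j\<in>Ev m vn i. de_y m vn cn eps (Suc t) j)"
  by (simp add: de_x.simps(2) de_y_def)

lemma de_x_nonneg_le_eps:
  assumes "0 \<le> eps" "eps \<le> 1"
  shows "0 \<le> de_x m vn cn eps t i \<and> de_x m vn cn eps t i \<le> eps"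
proof (induction t arbitrary: i)
  case 0
  show ?case using assms by simp
next
  case (Suc t)
  have "0 \<le> de_y m vn cn eps (Suc t) j \<and> de_y m vn cn eps (Suc t) j \<le> 1" for j
    unfolding de_y_Suc using Suc.IH assms(2)
    by (intro one_minus_prod_one_minus_unit_interval) (meson order_trans)
  then have "0 \<le> (\<Prod>j\<in>Ev m vn i. de_y m vn cn eps (Suc t) j)"
    "(\<Prod>j\<in>Ev m vn i. de_y m vn cn eps (Suc t) j) \<le> 1"
    by (auto intro: prod_nonneg prod_le_1)
  then show ?case using assms(1) by (simp add: de_x_Suc mult_left_le)
qed

lemma de_x_unit_interval:
  assumes "0 \<le> eps" "eps \<le> 1"
  shows "0 \<le> de_x m vn cn eps t i \<and> de_x m vn cn eps t i \<le> 1"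
  using de_x_nonneg_le_eps[OF assms] assms(2) by (meson order_trans)

lemma de_y_Suc_unit_interval:
  assumes "0 \<le> eps" "eps \<le> 1"
  shows "0 \<le> de_y m vn cn eps (Suc t) j \<and> de_y m vn cn eps (Suc t) j \<le> 1"
  unfolding de_y_Suc using de_x_unit_interval[OF assms]
  by (intro one_minus_prod_one_minus_unit_interval) blast

lemma de_x_Suc_le_prod:
  assumes "0 \<le> eps" "eps \<le> 1"
  shows "de_x m vn cn eps (Suc t) i \<le> (\<Prod>j\<in>Ev m vn i. de_y m vn cn eps (Suc t) j)"
proof -
  have "0 \<le> (\<Prod>j\<in>Ev m vn i. de_y m vn cn eps (Suc t) j)"
    by (intro prod_nonneg) (use de_y_Suc_unit_interval[OF assms] in blast)
  then show ?thesis using assms by (simp add: de_x_Suc mult_left_le_one_le)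
qed

lemma de_x_Suc_mono:
  assumes "0 \<le> e1" "e1 \<le> e2" "e2 \<le> 1"
    and "\<And>k. de_x m vn cn e1 s k \<le> de_x m vn cn e2 t k"
  shows "de_x m vn cn e1 (Suc s) i \<le> de_x m vn cn e2 (Suc t) i"
proof -
  have x1: "0 \<le> de_x m vn cn e1 s k \<and> de_x m vn cn e1 s k \<le> 1" for k
    using assms(1-3) by (intro de_x_unit_interval) auto
  have x2: "0 \<le> de_x m vn cn e2 t k \<and> de_x m vn cn e2 t k \<le> 1" for k
    using assms(1-3) by (intro de_x_unit_interval) auto
  have "de_y m vn cn e1 (Suc s) j \<le> de_y m vn cn e2 (Suc t) j" for j
    unfolding de_y_Suc using x1 x2 assms(4) by (intro one_minus_prod_one_minus_mono) auto
  moreover have "0 \<le> de_y m vn cn e1 (Suc s) j" for j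
    using de_y_Suc_unit_interval[of e1 m vn cn s j] assms(1-3) by simp
  ultimately have "(\<Prod>j\<in>Ev m vn i. de_y m vn cn e1 (Suc s) j) \<le> (\<Prod>j\<in>Ev m vn i. de_y m vn cn e2 (Suc t) j)"
    "0 \<le> (\<Prod>j\<in>Ev m vn i. de_y m vn cn e1 (Suc s) j)"
    by (auto intro: prod_mono prod_nonneg)
  then show ?thesis using assms(1,2) by (simp add: de_x_Suc mult_mono)
qed

lemma de_x_mono_eps:
  assumes "0 \<le> e1" "e1 \<le> e2" "e2 \<le> 1"
  shows "de_x m vn cn e1 t i \<le> de_x m vn cn e2 t i"
proof (induction t arbitrary: i)
  case 0
  show ?case using assms by simp
next
  case (Suc t)
  then show ?case using assms by (intro de_x_Suc_mono) auto
qed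

lemma de_x_antimono:
  assumes "0 \<le> eps" "eps \<le> 1" "t \<le> s"
  shows "de_x m vn cn eps s i \<le> de_x m vn cn eps t i"
proof -
  have "de_x m vn cn eps (Suc t) i \<le> de_x m vn cn eps t i" for t
  proof (induction t arbitrary: i)
    case 0
    show ?case using de_x_nonneg_le_eps[OF assms(1,2), of m vn cn "Suc 0" i] by simp
  next
    case (Suc t)
    then show ?case using assms(1,2) by (intro de_x_Suc_mono) auto
  qed
  then have "decseq (\<lambda>t. de_x m vn cn eps t i)"
    by (rule decseq_SucI)
  then show ?thesis using assms(3) by (rule decseqD)
qed

lemma de_y_Suc_le:
  assumes "0 \<le> eps" "eps \<le> 1" "0 \<le> u" "\<And>k. k \<in> Ec m cn j \<Longrightarrow> de_x m vn cn eps t k \<le> u"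
  shows "de_y m vn cn eps (Suc t) j \<le> real m * u"
proof -
  have "card (Ec m cn j) \<le> m"
    using card_mono[of "{..<m}" "Ec m cn j"] by (auto simp: Ec_def)
  have "de_y m vn cn eps (Suc t) j \<le> (\<Sum>k\<in>Ec m cn j. de_x m vn cn eps t k)"
    unfolding de_y_Suc using de_x_unit_interval[OF assms(1,2)]
    by (intro one_minus_prod_one_minus_le_sum)
  also have "\<dots> \<le> real (card (Ec m cn j)) * u"
    using assms(4) by (rule sum_bounded_above)
  also have "\<dots> \<le> real m * u"
    using \<open>card (Ec m cn j) \<le> m\<close> assms(3) by (intro mult_right_mono) auto
  finally show ?thesis .
qed

lemma card_Ev: "i < m \<Longrightarrow> card (Ev m vn i) = vdeg m vn (vn i) - 1"
proof -
  assume "i < m"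
  have "Ev m vn i = {k. k < m \<and> vn k = vn i} - {i}"
    by (auto simp: Ev_def)
  then show ?thesis using \<open>i < m\<close> by (simp add: vdeg_def card_Diff_singleton)
qed

lemma de_x_Suc_le_square_of_vdeg_ge_3:
  assumes "0 \<le> eps" "eps \<le> 1" "0 \<le> u" "\<forall>k<m. de_x m vn cn eps t k \<le> u"
    and "i < m" "3 \<le> vdeg m vn (vn i)"
  shows "de_x m vn cn eps (Suc t) i \<le> (real m * u)\<^sup>2"
proof -
  let ?y = "de_y m vn cn eps (Suc t)"
  have "\<not> card (Ev m vn i) \<le> Suc 0"
    using card_Ev[OF assms(5), of vn] assms(6) by simp
  then obtain j1 j2 where j: "j1 \<in> Ev m vn i" "j2 \<in> Ev m vn i" "j1 \<noteq> j2"
    by (auto simp: card_le_Suc0_iff_eq)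
  have y: "0 \<le> ?y j \<and> ?y j \<le> 1" "?y j \<le> real m * u" for j
    using de_y_Suc_unit_interval[OF assms(1,2), of m vn cn t j] assms(1-4)
    by (auto intro: de_y_Suc_le simp: Ec_def)
  have "de_x m vn cn eps (Suc t) i \<le> (\<Prod>j\<in>Ev m vn i. ?y j)"
    using assms(1,2) by (rule de_x_Suc_le_prod)
  also have "\<dots> \<le> ?y j1 * ?y j2"
    using j y(1) by (intro prod_le_pair_of_factors) auto
  also have "\<dots> \<le> (real m * u) * (real m * u)"
    using y assms(3) by (intro mult_mono) auto
  finally show ?thesis by (simp add: power2_eq_square)
qed

definition other_edge :: "nat \<Rightarrow> (nat \<Rightarrow> 'v) \<Rightarrow> nat \<Rightarrow> nat" where
  "other_edge m vn i = (SOME j. j \<in> Ev m vn i)"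

lemma Ev_eq_other_edge:
  assumes "i < m" "vdeg m vn (vn i) = 2"
  shows "Ev m vn i = {other_edge m vn i}"
proof -
  have "card (Ev m vn i) = Suc 0"
    using card_Ev[OF assms(1), of vn] assms(2) by simp
  then obtain j where "Ev m vn i = {j}"
    by (auto simp: card_1_singleton_iff)
  then show ?thesis by (simp add: other_edge_def)
qed

lemma other_edge_in_Ev: "i < m \<Longrightarrow> vdeg m vn (vn i) = 2 \<Longrightarrow> other_edge m vn i \<in> Ev m vn i"
  using Ev_eq_other_edge by fastforce

lemma de_x_Suc_le_of_vdeg_2:
  assumes "0 \<le> eps" "eps \<le> 1" "0 \<le> u" "i < m" "vdeg m vn (vn i) = 2"
    and "\<And>k. k \<in> Ec m cn (other_edge m vn i) \<Longrightarrow> de_x m vn cn eps t k \<le> u"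
  shows "de_x m vn cn eps (Suc t) i \<le> real m * u"
proof -
  have "de_x m vn cn eps (Suc t) i \<le> de_y m vn cn eps (Suc t) (other_edge m vn i)"
    using de_x_Suc_le_prod[OF assms(1,2), of m vn cn t i] Ev_eq_other_edge[OF assms(4,5)] by simp
  also have "\<dots> \<le> real m * u"
    using assms(1-3,6) by (rule de_y_Suc_le)
  finally show ?thesis .
qed

lemma minimal_closed_segment:
  fixes w :: "nat \<Rightarrow> 'a"
  assumes "0 < n" "w 0 = w n"
  obtains a d where "0 < d" "a + d \<le> n" "w (a + d) = w a" "inj_on (\<lambda>k. w (a + k)) {..<d}"
proof -
  let ?closes = "\<lambda>d. 0 < d \<and> (\<exists>a. a + d \<le> n \<and> w (a + d) = w a)"
  define d where "d = (LEAST d. ?closes d)"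
  have "?closes d"
    unfolding d_def by (rule LeastI[of ?closes n]) (use assms in auto)
  then obtain a where a: "0 < d" "a + d \<le> n" "w (a + d) = w a"
    by blast
  have "w (a + k) \<noteq> w (a + l)" if "k < l" "l < d" for k l
  proof
    assume "w (a + k) = w (a + l)"
    then have "?closes (l - k)"
      using that a(2) by (intro conjI exI[of _ "a + k"]) auto
    then have "d \<le> l - k"
      unfolding d_def by (rule Least_le)
    then show False using that by simp
  qed
  then have "inj_on (\<lambda>k. w (a + k)) {..<d}"
    by (intro inj_onI) (metis lessThan_iff linorder_neq_iff)
  with a that show ?thesis by blast
qed

lemma joins_same_edge:
  "joins vn cn i p q \<Longrightarrow> joins vn cn i p' q' \<Longrightarrow> (p = p' \<and> q = q') \<or> (p = q' \<and> q = p')"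
  by (auto simp: joins_def)

lemma nonbacktracking_walk_inj_edges:
  assumes inj_w: "inj_on w {..<d}"
    and walk: "\<And>k. k < d \<Longrightarrow> joins vn cn (e k) (w k) (w (Suc k))"
    and non_backtracking: "\<And>k. Suc k < d \<Longrightarrow> e k \<noteq> e (Suc k)"
  shows "inj_on e {..<d}"
proof -
  have "e k \<noteq> e l" if "k < l" "l < d" for k l
  proof
    assume same: "e k = e l"
    have "joins vn cn (e k) (w k) (w (Suc k))" "joins vn cn (e k) (w l) (w (Suc l))"
      using walk[of k] walk[of l] same that by simp_all
    then consider "w k = w l" | "w (Suc k) = w l"
      using joins_same_edge by blast
    then show False
    proof cases
      case 1
      then show False using inj_onD[OF inj_w, of k l] that by simp
    next
      case 2
      then show False
        using inj_onD[OF inj_w, of "Suc k" l] non_backtracking[of k] same that by fastforce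
    qed
  qed
  then show ?thesis
    by (intro inj_onI) (metis lessThan_iff linorder_neq_iff)
qed

lemma closed_walk_has_cycle_G2:
  fixes w :: "nat \<Rightarrow> 'v + 'c" and vn :: "nat \<Rightarrow> 'v" and cn :: "nat \<Rightarrow> 'c"
  assumes "0 < n" "w 0 = w n"
    and walk: "\<And>k. k < n \<Longrightarrow> G2_edge m vn (e k) \<and> joins vn cn (e k) (w k) (w (Suc k))"
    and non_backtracking: "\<And>k. Suc k < n \<Longrightarrow> e k \<noteq> e (Suc k)"
  shows "has_cycle_G2 m vn cn"
proof -
  obtain a d where seg: "0 < d" "a + d \<le> n" "w (a + d) = w a"
    and inj_w: "inj_on (\<lambda>k. w (a + k)) {..<d}"
    using minimal_closed_segment[OF assms(1,2)] .
  have step: "G2_edge m vn (e (a + k)) \<and> joins vn cn (e (a + k)) (w (a + k)) (w (a + Suc k))"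
    if "k < d" for k
    using walk[of "a + k"] that seg(2) by simp
  have "d \<noteq> 1"
    using step[of 0] seg(3) by (auto simp: joins_def)
  then have "2 \<le> d" using seg(1) by simp
  have inj_e: "inj_on (\<lambda>k. e (a + k)) {..<d}"
    using inj_w step non_backtracking seg(2)
    by (intro nonbacktracking_walk_inj_edges[where vn = vn and cn = cn]) auto
  define es where "es = map (\<lambda>k. e (a + k)) [0..<d]"
  define ns where "ns = map (\<lambda>k. w (a + k)) [0..<d]"
  have "ns ! ((j + 1) mod d) = w (a + Suc j)" if "j < d" for j
  proof (cases "Suc j < d")
    case True
    then show ?thesis by (simp add: ns_def)
  next
    case False
    then have "Suc j = d" using that by simp
    then show ?thesis using seg(1,3) by (simp add: ns_def)
  qed
  then have "\<forall>j < length es. G2_edge m vn (es ! j) \<and>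
      joins vn cn (es ! j) (ns ! j) (ns ! ((j + 1) mod length es))"
    using step by (simp add: es_def ns_def)
  moreover have "distinct es" "distinct ns"
    using inj_e inj_w by (simp_all add: es_def ns_def distinct_map atLeast0LessThan)
  ultimately show ?thesis
    unfolding has_cycle_G2_def using \<open>2 \<le> d\<close>
    by (intro exI[of _ es] exI[of _ ns]) (simp add: es_def ns_def)
qed

text \<open>x_t(k) enters x_{t+1}(i): the edges k and other_edge i meet at a check node, so they form a
  walk of length two in G_2 from the variable node of k to that of i.\<close>

definition G2_feeds :: "nat \<Rightarrow> (nat \<Rightarrow> 'v) \<Rightarrow> (nat \<Rightarrow> 'c) \<Rightarrow> nat \<Rightarrow> nat \<Rightarrow> bool" where
  "G2_feeds m vn cn k i \<longleftrightarrow>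
     i < m \<and> vdeg m vn (vn i) = 2 \<and> vdeg m vn (vn k) = 2 \<and> k \<in> Ec m cn (other_edge m vn i)"

text \<open>The chain lifts to the closed walk vn(c 0), cn(c 0), vn(c 1), cn(c 1), ... in G_2 through the
  edges c 0, other_edge (c 1), c 1, other_edge (c 2), ...\<close>

lemma closed_G2_feeds_chain_has_cycle_G2:
  assumes "0 < p" "c 0 = c p" "\<And>a. a < p \<Longrightarrow> G2_feeds m vn cn (c a) (c (Suc a))"
  shows "has_cycle_G2 m vn cn"
proof -
  let ?o = "\<lambda>a. other_edge m vn (c (Suc a))"
  define w where
    "w k = (if even k then Inl (vn (c (k div 2))) else Inr (cn (c (k div 2))))" for k
  define e where "e k = (if even k then c (k div 2) else ?o (k div 2))" for k
  have link: "c a < m" "vdeg m vn (vn (c a)) = 2" "?o a < m" "vdeg m vn (vn (?o a)) = 2"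
    "vn (?o a) = vn (c (Suc a))" "cn (?o a) = cn (c a)" "c a \<noteq> ?o a" "?o a \<noteq> c (Suc a)"
    if "a < p" for a
    using assms(3)[OF that] other_edge_in_Ev[of "c (Suc a)" m vn] by (auto simp: G2_feeds_def Ec_def Ev_def)
  have "G2_edge m vn (e k) \<and> joins vn cn (e k) (w k) (w (Suc k)) \<and>
      (Suc k < 2 * p \<longrightarrow> e k \<noteq> e (Suc k))" if "k < 2 * p" for k
  proof -
    obtain q where q: "k = 2 * q \<or> k = 2 * q + 1"
      by (metis evenE oddE)
    then have "q < p" using that by auto
    from q show ?thesis
      using link[OF \<open>q < p\<close>] that by (auto simp: e_def w_def G2_edge_def joins_def)
  qed
  moreover have "w 0 = w (2 * p)"
    using assms(2) by (simp add: w_def)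
  ultimately show ?thesis
    using assms(1) by (intro closed_walk_has_cycle_G2[of "2 * p" w m vn e cn]) simp_all
qed

locale G2_acyclic_protograph =
  fixes m :: nat and vn :: "nat \<Rightarrow> 'v" and cn :: "nat \<Rightarrow> 'c"
  assumes vdeg_ge_2: "\<And>i. i < m \<Longrightarrow> 2 \<le> vdeg m vn (vn i)"
    and G2_acyclic: "\<not> has_cycle_G2 m vn cn"
begin

lemma no_long_G2_feeds_chain:
  assumes "i < m"
  shows "\<not> (G2_feeds m vn cn ^^ m) k i"
proof
  assume "(G2_feeds m vn cn ^^ m) k i"
  then obtain c where c: "c m = i" "\<And>a. a < m \<Longrightarrow> G2_feeds m vn cn (c a) (c (Suc a))"
    unfolding relpowp_fun_conv by blast
  have "c a < m" if "a \<le> m" for a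
  proof (cases "a = m")
    case True
    then show ?thesis using c(1) assms by simp
  next
    case False
    then show ?thesis using that c(2)[of a] by (simp add: G2_feeds_def Ec_def)
  qed
  then have "card (c ` {..m}) \<le> card {..<m}"
    by (intro card_mono) auto
  then have "\<not> inj_on c {..m}"
    by (intro pigeonhole) simp
  then obtain a b where "a < b" "b \<le> m" "c a = c b"
    unfolding inj_on_def by (metis atMost_iff linorder_neq_iff)
  then have "has_cycle_G2 m vn cn"
    using c(2) by (intro closed_G2_feeds_chain_has_cycle_G2[of "b - a" "\<lambda>j. c (a + j)"]) simp_all
  then show False using G2_acyclic by blast
qed

lemma de_x_le_of_no_G2_feeds_chain:
  assumes "0 \<le> eps" "eps \<le> 1" "0 \<le> u" "\<forall>k<m. de_x m vn cn eps t k \<le> u"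
  shows "i < m \<Longrightarrow> vdeg m vn (vn i) = 2 \<Longrightarrow> (\<And>k. \<not> (G2_feeds m vn cn ^^ n) k i) \<Longrightarrow>
    de_x m vn cn eps (t + n + 1) i \<le> real m ^ (n + 2) * u\<^sup>2"
proof (induction n arbitrary: i)
  case 0
  then show ?case using relpowp_0_I by metis
next
  case (Suc n)
  have "0 < m" using Suc.prems(1) by simp
  have "de_x m vn cn eps (t + n + 1) k \<le> real m ^ (n + 2) * u\<^sup>2"
    if k: "k \<in> Ec m cn (other_edge m vn i)" for k
  proof -
    have "k < m" using k by (simp add: Ec_def)
    show ?thesis
    proof (cases "vdeg m vn (vn k) = 2")
      case True
      then have "G2_feeds m vn cn k i"
        using Suc.prems(1,2) k by (simp add: G2_feeds_def)
      then have "\<not> (G2_feeds m vn cn ^^ n) k' k" for k'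
        using Suc.prems(3)[of k'] relpowp_Suc_I[of n "G2_feeds m vn cn" k' k i] by blast
      then show ?thesis
        using Suc.IH[OF \<open>k < m\<close> True] by blast
    next
      case False
      then have "3 \<le> vdeg m vn (vn k)"
        using vdeg_ge_2[OF \<open>k < m\<close>] by simp
      moreover have "\<forall>k<m. de_x m vn cn eps (t + n) k \<le> u"
        using assms(4) order_trans[OF de_x_antimono[OF assms(1,2) le_add1]] by blast
      ultimately have "de_x m vn cn eps (Suc (t + n)) k \<le> (real m * u)\<^sup>2"
        using assms(1-3) \<open>k < m\<close> by (intro de_x_Suc_le_square_of_vdeg_ge_3) auto
      also have "\<dots> = real m ^ 2 * u\<^sup>2"
        by (simp add: power_mult_distrib)
      also have "\<dots> \<le> real m ^ (n + 2) * u\<^sup>2"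
        using \<open>0 < m\<close> by (intro mult_right_mono power_increasing) auto
      finally show ?thesis by simp
    qed
  qed
  then have "de_x m vn cn eps (Suc (t + n + 1)) i \<le> real m * (real m ^ (n + 2) * u\<^sup>2)"
    using assms(1,2) Suc.prems(1,2) by (intro de_x_Suc_le_of_vdeg_2) auto
  then show ?case by simp
qed

lemma de_x_le_square:
  assumes "0 \<le> eps" "eps \<le> 1" "0 \<le> u" "\<forall>k<m. de_x m vn cn eps t k \<le> u" "i < m"
  shows "de_x m vn cn eps (t + (m + 1)) i \<le> real m ^ (m + 2) * u\<^sup>2"
proof (cases "vdeg m vn (vn i) = 2")
  case True
  then show ?thesis
    using de_x_le_of_no_G2_feeds_chain[OF assms(1-4) assms(5) True] no_long_G2_feeds_chain[OF assms(5)]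
    by (simp add: add.assoc)
next
  case False
  then have "3 \<le> vdeg m vn (vn i)"
    using vdeg_ge_2[OF assms(5)] by simp
  have "de_x m vn cn eps (t + (m + 1)) i \<le> de_x m vn cn eps (Suc t) i"
    using assms(1,2) by (rule de_x_antimono) simp
  also have "\<dots> \<le> (real m * u)\<^sup>2"
    using assms \<open>3 \<le> vdeg m vn (vn i)\<close> by (intro de_x_Suc_le_square_of_vdeg_ge_3)
  also have "\<dots> = real m ^ 2 * u\<^sup>2"
    by (simp add: power_mult_distrib)
  also have "\<dots> \<le> real m ^ (m + 2) * u\<^sup>2"
    using assms(5) by (intro mult_right_mono power_increasing) auto
  finally show ?thesis .
qed

lemma de_x_doubly_exponential:
  assumes "0 \<le> eps" "eps \<le> 1" "\<forall>k<m. de_x m vn cn eps T k \<le> 1 / (2 * real m ^ (m + 2))"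
    and "i < m" "T \<le> t"
  shows "de_x m vn cn eps t i
           \<le> exp (- (ln 2 / 2 powr (real T / real (m + 1) + 1)) * 2 powr (1 / real (m + 1) * real t))"
proof -
  define A where "A = real m ^ (m + 2)"
  have "1 \<le> A"
    unfolding A_def using assms(4) by (intro one_le_power) simp
  have squares: "\<forall>k<m. de_x m vn cn eps (T + n * (m + 1)) k \<le> (1/2) ^ (2 ^ n) / A" for n
  proof (rule iterated_squaring[where P = "\<lambda>t u. \<forall>k<m. de_x m vn cn eps t k \<le> u"])
    show "0 < A" using \<open>1 \<le> A\<close> by simp
    show "\<forall>k<m. de_x m vn cn eps (t + (m + 1)) k \<le> A * u\<^sup>2"
      if "0 \<le> u" "\<forall>k<m. de_x m vn cn eps t k \<le> u" for t u
      unfolding A_def using de_x_le_square[OF assms(1,2) that] by blast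
    show "\<forall>k<m. de_x m vn cn eps T k \<le> 1 / (2 * A)"
      unfolding A_def using assms(3) by blast
  qed
  define n where "n = (t - T) div (m + 1)"
  have "T + n * (m + 1) \<le> t"
    unfolding n_def using assms(5) div_times_less_eq_dividend[of "t - T" "m + 1"] by simp
  with assms(1,2) have "de_x m vn cn eps t i \<le> de_x m vn cn eps (T + n * (m + 1)) i"
    by (rule de_x_antimono)
  also have "\<dots> \<le> (1/2) ^ (2 ^ n) / A"
    using squares assms(4) by blast
  also have "\<dots> \<le> (1/2) ^ (2 ^ n)"
    using \<open>1 \<le> A\<close> by (simp add: divide_le_eq mult_le_cancel_left1 power_le_one)
  also have "\<dots> \<le> exp (- (ln 2 / 2 powr (real T / real (m + 1) + 1)) * 2 powr (1 / real (m + 1) * real t))"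
    unfolding n_def using assms(5) by (intro half_pow_two_pow_le_exp) auto
  finally show ?thesis .
qed

end

lemma below_threshold_obtains_converging:
  assumes "0 < m" "eps < threshold m vn cn"
  obtains e' where "eps < e'" "e' \<le> 1" "(\<lambda>t. Max ((\<lambda>i. de_x m vn cn e' t i) ` {..<m})) \<longlonglongrightarrow> 0"
proof -
  define S where "S = {eps. 0 \<le> eps \<and> eps \<le> 1 \<and>
    (\<lambda>t. Max ((\<lambda>i. de_x m vn cn eps t i) ` {..<m})) \<longlonglongrightarrow> 0}"
  have "de_x m vn cn 0 t i = 0" for t i
    by (cases t) (simp_all add: de_x_Suc)
  then have "(\<lambda>i. de_x m vn cn 0 t i) ` {..<m} = {0}" for t
    using assms(1) by auto
  then have "0 \<in> S"
    by (simp add: S_def)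
  moreover have "bdd_above S"
    by (auto simp: S_def intro: bdd_aboveI[of _ 1])
  moreover have "eps < Sup S"
    using assms(2) by (simp add: threshold_def S_def)
  ultimately obtain e' where "e' \<in> S" "eps < e'"
    using less_cSup_iff[of S eps] by blast
  with that show ?thesis by (auto simp: S_def)
qed

lemma de_x_eventually_le:
  assumes "0 \<le> eps" "eps \<le> e'" "e' \<le> 1" "0 < \<delta>"
    and "(\<lambda>t. Max ((\<lambda>i. de_x m vn cn e' t i) ` {..<m})) \<longlonglongrightarrow> 0"
  obtains T where "\<forall>i<m. de_x m vn cn eps T i \<le> \<delta>"
proof -
  obtain T where T: "\<bar>Max ((\<lambda>i. de_x m vn cn e' T i) ` {..<m})\<bar> < \<delta>"
    using LIMSEQ_D[OF assms(5,4)] by auto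
  have "de_x m vn cn eps T i \<le> \<delta>" if "i < m" for i
  proof -
    have "de_x m vn cn eps T i \<le> de_x m vn cn e' T i"
      using assms(1-3) by (rule de_x_mono_eps)
    also have "\<dots> \<le> Max ((\<lambda>i. de_x m vn cn e' T i) ` {..<m})"
      using that by (intro Max_ge) auto
    finally show ?thesis using T by simp
  qed
  with that show ?thesis by blast
qed

theorem theorem1:
  fixes V :: "'v set" and C :: "'c set" and m :: nat
    and vn :: "nat \<Rightarrow> 'v" and cn :: "nat \<Rightarrow> 'c"
  assumes "protograph V C m vn cn"
    and "\<forall>v\<in>V. vdeg m vn v \<ge> 2"
    and "\<not> has_cycle_G2 m vn cn"
    and "\<forall>v\<in>V. vdeg m vn v = 2 \<longrightarrow>
           (\<exists>w\<in>V. vdeg m vn w \<ge> 3 \<and> (Inl v, Inl w) \<in> (adjG m vn cn)\<^sup>*)"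
  shows "\<forall>eps. 0 \<le> eps \<and> eps < threshold m vn cn \<longrightarrow>
           (\<exists>\<alpha>>0. \<exists>\<beta>>0. \<exists>K>0. \<exists>t0::nat. \<forall>i<m. \<forall>t\<ge>t0.
              de_x m vn cn eps t i \<le> K * exp (- \<beta> * 2 powr (\<alpha> * real t)))"
proof (intro allI impI)
  fix eps assume eps: "0 \<le> eps \<and> eps < threshold m vn cn"
  show "\<exists>\<alpha>>0. \<exists>\<beta>>0. \<exists>K>0. \<exists>t0::nat. \<forall>i<m. \<forall>t\<ge>t0.
          de_x m vn cn eps t i \<le> K * exp (- \<beta> * 2 powr (\<alpha> * real t))"
  proof (cases "m = 0")
    case False
    interpret G2_acyclic_protograph m vn cn
      using assms(1-3) by unfold_locales (auto simp: protograph_def)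
    obtain e' where e': "eps < e'" "e' \<le> 1"
      "(\<lambda>t. Max ((\<lambda>i. de_x m vn cn e' t i) ` {..<m})) \<longlonglongrightarrow> 0"
      using below_threshold_obtains_converging[of m eps vn cn] False eps by blast
    have "0 \<le> eps" "eps \<le> 1"
      using eps e' by simp_all
    have "0 < 1 / (2 * real m ^ (m + 2))"
      using False by simp
    then obtain T where T: "\<forall>k<m. de_x m vn cn eps T k \<le> 1 / (2 * real m ^ (m + 2))"
      using de_x_eventually_le[OF \<open>0 \<le> eps\<close> less_imp_le[OF e'(1)] e'(2) _ e'(3)] by blast
    define \<alpha> where "\<alpha> = 1 / real (m + 1)"
    define \<beta> where "\<beta> = ln 2 / 2 powr (real T / real (m + 1) + 1)"
    have "de_x m vn cn eps t i \<le> 1 * exp (- \<beta> * 2 powr (\<alpha> * real t))" if "i < m" "T \<le> t" for i t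
      using de_x_doubly_exponential[OF \<open>0 \<le> eps\<close> \<open>eps \<le> 1\<close> T that]
      unfolding \<alpha>_def \<beta>_def by (simp only: mult_1)
    moreover have "0 < \<alpha>" "0 < \<beta>"
      by (simp_all add: \<alpha>_def \<beta>_def)
    ultimately show ?thesis
      using zero_less_one by blast
  qed (intro exI[of _ 1] conjI exI[of _ 0]; simp)
qed

end
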